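(* Let $W\in\mathbb{R}^{d\times d}$ be symmetric positive definite, $b\in\mathbb{R}^d$, $c\in\mathbb{R}$, and consider $\min_{x\in\mathbb{R}^d} f(x)=\frac12 x^TWx-b^Tx+c$, with unique solution $x^\star=W^{-1}b$. Let $W=Q\Lambda Q^T$ be an eigendecomposition with $Q$ orthogonal and $\Lambda$ diagonal. Consider an optimization method of the form $$x_{k+1}-x^\star = Q A Q^T (x_k-x^\star) + Q B Q^T (x_{k-1}-x^\star),\qquad k\ge 1,$$ started from arbitrary $x_0,x_1\in\mathbb{R}^d$, where $A=\mathrm{diag}(a_1,\dots,a_d)$ and $B=\mathrm{diag}(b_1,\dots,b_d)$ are real diagonal matrices (equivalently, in the coordinates $\hat x_k=Q^T(x_k-x^\star)$ the method reads $\hat x_{k+1}=A\hat x_k+B\hat x_{k-1}$, i.e. $z_{k+1}=Mz_k$ with $M=\begin{bmatrix}A & B\\ I & 0\end{bmatrix}$, $z_k=(\hat x_k,\hat x_{k-1})$). Assume the method converges to $x^\star$, and that for each $i\in\{1,\dots,d\}$ the two eigenvalues $\lambda_1^{M_i},\lambda_2^{M_i}$ of the $2\times 2$ matrix $M_i=\begin{bmatrix} a_i & b_i\\ 1 & 0\end{bmatrix}$ form a conjugate pair, i.e. $(\lambda_1^{M_i})^*=\lambda_2^{M_i}$. Then $$V(x_k,x_{k-1},x_{k-2})=\|x_{k-1}-x^\star\|^2-\langle x_k-x^\star,\,x_{k-2}-x^\star\rangle$$ is a Lyapunov function for this method.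
   Context: The method is said to converge to $x^\star$ if $x_k\to x^\star$ for every choice of initial points $x_0,x_1$. A function $V(x_k,x_{k-1},x_{k-2})$ is called a Lyapunov function for the method if, along every trajectory of the method, $V(x_k,x_{k-1},x_{k-2})\ge 0$ for all $k\ge 2$ and $V(x_{k+1},x_k,x_{k-1})\le V(x_k,x_{k-1},x_{k-2})$ for all $k\ge 2$. "Conjugate pair" means the two eigenvalues are complex conjugates of each other (this includes the case of two equal real eigenvalues). Here $\|\cdot\|$ and $\langle\cdot,\cdot\rangle$ are the Euclidean norm and inner product. *)

theory Defs
  imports "HOL-Analysis.Analysis"
begin

definition diag_mat :: "real ^ 'n \<Rightarrow> real ^ 'n ^ 'n" where
  "diag_mat v = (\<chi> i j. if i = j then v $ i else 0)"

definition is_diagonal :: "real ^ 'n ^ 'n \<Rightarrow> bool" where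
  "is_diagonal L \<longleftrightarrow> (\<forall>i j. i \<noteq> j \<longrightarrow> L $ i $ j = 0)"

definition pos_def_matrix :: "real ^ 'n ^ 'n \<Rightarrow> bool" where
  "pos_def_matrix W \<longleftrightarrow> transpose W = W \<and> (\<forall>v. v \<noteq> 0 \<longrightarrow> v \<bullet> (W *v v) > 0)"

definition M2 :: "real \<Rightarrow> real \<Rightarrow> real ^ 2 ^ 2" where
  "M2 a b = (\<chi> i j. if i = 1 then (if j = 1 then a else b) else (if j = 1 then 1 else 0))"

definition eigenvalues2 :: "real ^ 2 ^ 2 \<Rightarrow> complex \<Rightarrow> complex \<Rightarrow> bool" where
  "eigenvalues2 M l1 l2 \<longleftrightarrow>
     (\<forall>z::complex. det (mat z - (\<chi> i j. complex_of_real (M $ i $ j))) = (z - l1) * (z - l2))"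

definition conjugate_pair_eigs :: "real ^ 2 ^ 2 \<Rightarrow> bool" where
  "conjugate_pair_eigs M \<longleftrightarrow> (\<exists>l1 l2. eigenvalues2 M l1 l2 \<and> cnj l1 = l2)"

definition is_trajectory ::
  "real ^ 'n \<Rightarrow> real ^ 'n ^ 'n \<Rightarrow> real ^ 'n ^ 'n \<Rightarrow> real ^ 'n ^ 'n \<Rightarrow> (nat \<Rightarrow> real ^ 'n) \<Rightarrow> bool" where
  "is_trajectory xs Q A B x \<longleftrightarrow>
     (\<forall>k\<ge>1. x (Suc k) - xs = (Q ** A ** transpose Q) *v (x k - xs)
                            + (Q ** B ** transpose Q) *v (x (k - 1) - xs))"

definition is_lyapunov ::
  "((nat \<Rightarrow> real ^ 'n) \<Rightarrow> bool) \<Rightarrow> (real ^ 'n \<Rightarrow> real ^ 'n \<Rightarrow> real ^ 'n \<Rightarrow> real) \<Rightarrow> bool" where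
  "is_lyapunov traj V \<longleftrightarrow>
     (\<forall>x. traj x \<longrightarrow>
        (\<forall>k\<ge>2. V (x k) (x (k - 1)) (x (k - 2)) \<ge> 0 \<and>
                V (x (Suc k)) (x k) (x (k - 1)) \<le> V (x k) (x (k - 1)) (x (k - 2))))"

end

theory Submission
  imports Defs
begin

(* In the coordinates Q\<^sup>T (x - x\<^sup>\<star>) the iteration decouples into scalar recurrences
   p (k+2) = a p (k+1) + b p k, and V splits into the sum of the quantities
   w k = p (k+1)\<^sup>2 - p (k+2) p k, which satisfy w (k+1) = -b w k.
   Conjugate eigenvalues of M_i mean a\<^sup>2 + 4b \<le> 0, which makes w a positive semidefinite
   quadratic form in (p (k+1), p k). Convergence of the solution with p 0 = 0, p 1 = 1,
   for which w k = (-b)^k, forces -b \<le> 1, so every w is nonnegative and nonincreasing.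
   The hypotheses on W only serve to fix x\<^sup>\<star>; the argument uses only the orthogonality of Q. *)

definition lin_rec2 :: "real \<Rightarrow> real \<Rightarrow> (nat \<Rightarrow> real) \<Rightarrow> bool" where
  "lin_rec2 a b p \<longleftrightarrow> (\<forall>m. p (Suc (Suc m)) = a * p (Suc m) + b * p m)"

definition casoratian :: "(nat \<Rightarrow> real) \<Rightarrow> nat \<Rightarrow> real" where
  "casoratian p m = (p (Suc m))\<^sup>2 - p (Suc (Suc m)) * p m"

lemma casoratian_Suc:
  assumes "lin_rec2 a b p"
  shows "casoratian p (Suc m) = - b * casoratian p m"
  using assms unfolding lin_rec2_def casoratian_def by (simp add: power2_eq_square algebra_simps)

lemma casoratian_eq_power:
  assumes "lin_rec2 a b p"
  shows "casoratian p m = (- b) ^ m * casoratian p 0"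
  by (induction m) (simp_all add: casoratian_Suc[OF assms])

lemma casoratian_nonneg:
  assumes "a\<^sup>2 + 4 * b \<le> 0" and "lin_rec2 a b p"
  shows "0 \<le> casoratian p m"
proof -
  have "4 * casoratian p m = (2 * p (Suc m) - a * p m)\<^sup>2 + (- a\<^sup>2 - 4 * b) * (p m)\<^sup>2"
    using assms(2) unfolding lin_rec2_def casoratian_def by (simp add: power2_eq_square algebra_simps)
  moreover have "0 \<le> (- a\<^sup>2 - 4 * b) * (p m)\<^sup>2"
    using assms(1) by simp
  ultimately have "0 \<le> 4 * casoratian p m"
    by simp
  then show ?thesis
    by simp
qed

lemma casoratian_Suc_le:
  assumes "a\<^sup>2 + 4 * b \<le> 0" and "- b \<le> 1" and "lin_rec2 a b p"
  shows "casoratian p (Suc m) \<le> casoratian p m"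
proof -
  have "casoratian p (Suc m) = - b * casoratian p m"
    using assms(3) by (rule casoratian_Suc)
  also have "\<dots> \<le> casoratian p m"
    using mult_right_mono[OF assms(2) casoratian_nonneg[OF assms(1,3)]] by simp
  finally show ?thesis .
qed

fun lin_rec2_fundamental :: "real \<Rightarrow> real \<Rightarrow> nat \<Rightarrow> real" where
  "lin_rec2_fundamental a b 0 = 0"
| "lin_rec2_fundamental a b (Suc 0) = 1"
| "lin_rec2_fundamental a b (Suc (Suc m)) =
     a * lin_rec2_fundamental a b (Suc m) + b * lin_rec2_fundamental a b m"

lemma lin_rec2_lin_rec2_fundamental: "lin_rec2 a b (lin_rec2_fundamental a b)"
  by (simp add: lin_rec2_def)

lemma lin_rec2_fundamental_tendsto_zero_imp:
  assumes "lin_rec2_fundamental a b \<longlonglongrightarrow> 0"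
  shows "- b \<le> 1"
proof (rule ccontr)
  assume "\<not> - b \<le> 1"
  let ?p = "lin_rec2_fundamental a b"
  have "casoratian ?p \<longlonglongrightarrow> 0\<^sup>2 - 0 * 0"
    unfolding casoratian_def by (intro tendsto_intros assms LIMSEQ_Suc)
  moreover have "casoratian ?p = (\<lambda>m. (- b) ^ m)"
    using casoratian_eq_power[OF lin_rec2_lin_rec2_fundamental] by (auto simp: casoratian_def numeral_2_eq_2)
  ultimately have "(\<lambda>m. (- b) ^ m) \<longlonglongrightarrow> 0"
    by simp
  moreover have "1 \<le> (- b) ^ m" for m
    using \<open>\<not> - b \<le> 1\<close> by (simp add: one_le_power)
  ultimately show False
    using LIMSEQ_le_const[of "\<lambda>m. (- b) ^ m" 0 1] by simp
qed

lemma conjugate_pair_eigs_M2_discriminant: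
  assumes "conjugate_pair_eigs (M2 a b)"
  shows "a\<^sup>2 + 4 * b \<le> 0"
proof -
  obtain l where l: "\<And>z. det (mat z - (\<chi> i j. complex_of_real (M2 a b $ i $ j))) = (z - l) * (z - cnj l)"
    using assms unfolding conjugate_pair_eigs_def eigenvalues2_def by blast
  have "det (mat z - (\<chi> i j. complex_of_real (M2 a b $ i $ j))) = z\<^sup>2 - a * z - b" for z
    by (simp add: det_2 M2_def mat_def power2_eq_square algebra_simps)
  then have char: "z\<^sup>2 - a * z - b = (z - l) * (z - cnj l)" for z
    using l by metis
  have "- b = (Re l)\<^sup>2 + (Im l)\<^sup>2"
    using arg_cong[OF char[of 0], of Re] by (simp add: power2_eq_square)
  moreover have "a = 2 * Re l"
    using arg_cong[OF char[of 1], of Re] calculation by (simp add: power2_eq_square algebra_simps)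
  ultimately have "a\<^sup>2 + 4 * b = - 4 * (Im l)\<^sup>2"
    by (simp add: power2_eq_square algebra_simps)
  then show ?thesis
    by simp
qed

lemma diag_mat_mult_vec_nth [simp]: "(diag_mat a *v v) $ j = a $ j * v $ j"
  unfolding matrix_vector_mult_def diag_mat_def
  by (simp add: if_distrib[of "\<lambda>x. x * _"] cong: if_cong)

lemma orthogonal_matrix_inner:
  assumes "orthogonal_matrix (Q :: real ^ 'n ^ 'n)"
  shows "(Q *v u) \<bullet> (Q *v v) = u \<bullet> v"
  using assms orthogonal_transformation_matrix[of "(*v) Q"]
  unfolding orthogonal_transformation_def by simp

lemma orthogonal_matrix_transpose_mult_vec:
  assumes "orthogonal_matrix (Q :: real ^ 'n ^ 'n)"
  shows "transpose Q *v (Q *v v) = v" and "Q *v (transpose Q *v v) = v"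
  using assms by (simp_all only: matrix_vector_mul_assoc orthogonal_matrix_def matrix_vector_mul_lid)

lemma is_trajectory_iff_lin_rec2:
  assumes Q: "orthogonal_matrix Q"
  shows "is_trajectory xs Q (diag_mat a) (diag_mat b) x \<longleftrightarrow>
    (\<forall>i. lin_rec2 (a $ i) (b $ i) (\<lambda>k. (transpose Q *v (x k - xs)) $ i))"
proof -
  let ?y = "\<lambda>k. transpose Q *v (x k - xs)"
  have conj: "(Q ** D ** transpose Q) *v u = Q *v (D *v (transpose Q *v u))" for D u
    by (simp only: matrix_vector_mul_assoc matrix_mul_assoc)
  have step: "x (Suc m) - xs = (Q ** diag_mat a ** transpose Q) *v (x m - xs)
                + (Q ** diag_mat b ** transpose Q) *v (x (m - 1) - xs) \<longleftrightarrow>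
      (\<forall>i. ?y (Suc m) $ i = a $ i * ?y m $ i + b $ i * ?y (m - 1) $ i)" for m
  proof -
    have "x (Suc m) - xs = (Q ** diag_mat a ** transpose Q) *v (x m - xs)
                + (Q ** diag_mat b ** transpose Q) *v (x (m - 1) - xs) \<longleftrightarrow>
        x (Suc m) - xs = Q *v (diag_mat a *v ?y m + diag_mat b *v ?y (m - 1))"
      by (simp only: conj matrix_vector_right_distrib)
    also have "\<dots> \<longleftrightarrow> ?y (Suc m) = diag_mat a *v ?y m + diag_mat b *v ?y (m - 1)"
      using orthogonal_matrix_transpose_mult_vec[OF Q] by metis
    also have "\<dots> \<longleftrightarrow> (\<forall>i. ?y (Suc m) $ i = a $ i * ?y m $ i + b $ i * ?y (m - 1) $ i)"
      by (simp only: vec_eq_iff vector_add_component diag_mat_mult_vec_nth)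
    finally show ?thesis .
  qed
  show ?thesis
    unfolding is_trajectory_def lin_rec2_def step
    by (auto dest!: Suc_le_D)
qed

lemma converging_trajectories_imp_coeff_le:
  assumes Q: "orthogonal_matrix Q"
    and conv: "\<forall>x. is_trajectory xs Q (diag_mat a) (diag_mat b) x \<longrightarrow> x \<longlonglongrightarrow> xs"
  shows "- b $ i \<le> 1"
proof (rule lin_rec2_fundamental_tendsto_zero_imp)
  let ?p = "lin_rec2_fundamental (a $ i) (b $ i)"
  define x where "x k = xs + Q *v (?p k *s axis i 1)" for k
  have y: "transpose Q *v (x k - xs) = ?p k *s axis i 1" for k
    unfolding x_def using orthogonal_matrix_transpose_mult_vec(1)[OF Q] by simp
  have "is_trajectory xs Q (diag_mat a) (diag_mat b) x"
    unfolding is_trajectory_iff_lin_rec2[OF Q] y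
    by (simp add: lin_rec2_def axis_def)
  then have "(\<lambda>k. transpose Q *v (x k - xs)) \<longlonglongrightarrow> transpose Q *v (xs - xs)"
    using conv by (intro bounded_linear.tendsto[OF matrix_vector_mul_bounded_linear] tendsto_intros) auto
  then have "(\<lambda>k. (transpose Q *v (x k - xs)) $ i) \<longlonglongrightarrow> 0"
    by (intro tendsto_vec_nth[where a = 0, simplified]) simp
  then show "?p \<longlonglongrightarrow> 0"
    by (simp only: y) (simp add: axis_def)
qed

lemma lyapunov_eq_sum_casoratian:
  assumes Q: "orthogonal_matrix Q"
  shows "(norm (x (Suc m) - xs))\<^sup>2 - (x (Suc (Suc m)) - xs) \<bullet> (x m - xs) =
    (\<Sum>i\<in>UNIV. casoratian (\<lambda>k. (transpose Q *v (x k - xs)) $ i) m)"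
proof -
  have "u \<bullet> v = (\<Sum>i\<in>UNIV. (transpose Q *v u) $ i * (transpose Q *v v) $ i)" for u v
    using orthogonal_matrix_inner[of "transpose Q" u v] Q by (simp add: inner_vec_def)
  then show ?thesis
    unfolding power2_norm_eq_inner casoratian_def by (simp add: power2_eq_square sum_subtractf)
qed

theorem theorem2:
  fixes W Q \<Lambda> :: "real ^ 'n ^ 'n"
    and b :: "real ^ 'n" and c :: real
    and a bb :: "real ^ 'n"
  defines "xs \<equiv> matrix_inv W *v b"
  assumes W_pd: "pos_def_matrix W"
    and Q_orth: "orthogonal_matrix Q"
    and L_diag: "is_diagonal \<Lambda>"
    and eig: "W = Q ** \<Lambda> ** transpose Q"
    and conv: "\<forall>x. is_trajectory xs Q (diag_mat a) (diag_mat bb) x \<longrightarrow> x \<longlonglongrightarrow> xs"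
    and conj: "\<forall>i. conjugate_pair_eigs (M2 (a $ i) (bb $ i))"
  shows "is_lyapunov (is_trajectory xs Q (diag_mat a) (diag_mat bb))
           (\<lambda>xk xk1 xk2. (norm (xk1 - xs))\<^sup>2 - (xk - xs) \<bullet> (xk2 - xs))"
  unfolding is_lyapunov_def
proof (intro allI impI)
  fix x and k :: nat
  assume traj: "is_trajectory xs Q (diag_mat a) (diag_mat bb) x" and "2 \<le> k"
  then obtain m where k: "k = Suc (Suc m)"
    by (metis add_2_eq_Suc le_Suc_ex)
  let ?p = "\<lambda>i j. (transpose Q *v (x j - xs)) $ i"
  have rec: "lin_rec2 (a $ i) (bb $ i) (?p i)" for i
    using traj is_trajectory_iff_lin_rec2[OF Q_orth] by blast
  have disc: "(a $ i)\<^sup>2 + 4 * bb $ i \<le> 0" for i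
    using conj conjugate_pair_eigs_M2_discriminant by blast
  have coeff_le: "- bb $ i \<le> 1" for i
    using converging_trajectories_imp_coeff_le[OF Q_orth conv] .
  show "0 \<le> (norm (x (k - 1) - xs))\<^sup>2 - (x k - xs) \<bullet> (x (k - 2) - xs) \<and>
      (norm (x k - xs))\<^sup>2 - (x (Suc k) - xs) \<bullet> (x (k - 1) - xs)
        \<le> (norm (x (k - 1) - xs))\<^sup>2 - (x k - xs) \<bullet> (x (k - 2) - xs)"
    using lyapunov_eq_sum_casoratian[OF Q_orth, of x m] lyapunov_eq_sum_casoratian[OF Q_orth, of x "Suc m"]
      casoratian_nonneg[OF disc rec] casoratian_Suc_le[OF disc coeff_le rec]
    by (simp add: k sum_nonneg sum_mono)
qed

end
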